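(* Let $r\geq2$ and let $G$ be a weighted $r$-graph of order $n$ with degrees $d_1,\ldots,d_n$. Then \[ \rho(G)^r\leq\big((r-1)!\big)^r\max_{\{i_1,\ldots,i_r\}\in E(G)}d_{i_1}\cdots d_{i_r}. \]
   Context: A weighted $r$-graph $G$ on vertex set $[n]$ is a function $G:[n]^{(r)}\to[0,\infty)$ on $r$-element subsets; its edge set is $E(G)=\{e: G(e)>0\}$. The degree of vertex $v$ is $d_v=\sum\{G(e):e\in E(G),\ v\in e\}$. The adjacency matrix $A(G)$ is the cubical $r$-matrix of order $n$ with $a_{i_1,\ldots,i_r}=G(\{i_1,\ldots,i_r\})$ if $\{i_1,\ldots,i_r\}\in E(G)$ (in particular the $i_j$ are distinct) and $0$ otherwise. $\rho(G)$ is the spectral radius of $A(G)$: the largest modulus of a complex $\lambda$ for which there is a nonzero $\mathbf{x}\in\mathbb{C}^n$ with $\lambda x_k^{r-1}=\sum_{i_2,\ldots,i_r}a_{k,i_2,\ldots,i_r}x_{i_2}\cdots x_{i_r}$ for all $k$; equivalently, $\rho(G)=\max\{|\sum a_{i_1,\ldots,i_r}x_{i_1}\cdots x_{i_r}|:\mathbf{x}\in\mathbb{R}^n,\ |\mathbf{x}|_r=1\}$. *)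

theory Defs
  imports Complex_Main "HOL-Library.FuncSet"
begin

text \<open>Vertex set [n] is rendered as {..<n}. A weighted r-graph is a function
  G on sets of vertices; only its values on r-subsets of {..<n} matter.\<close>

definition weighted_rgraph :: "nat \<Rightarrow> nat \<Rightarrow> (nat set \<Rightarrow> real) \<Rightarrow> bool" where
  "weighted_rgraph n r G \<longleftrightarrow> (\<forall>e. e \<subseteq> {..<n} \<and> card e = r \<longrightarrow> G e \<ge> 0)"

definition edges :: "nat \<Rightarrow> nat \<Rightarrow> (nat set \<Rightarrow> real) \<Rightarrow> nat set set" where
  "edges n r G = {e. e \<subseteq> {..<n} \<and> card e = r \<and> G e > 0}"

definition degree :: "nat \<Rightarrow> nat \<Rightarrow> (nat set \<Rightarrow> real) \<Rightarrow> nat \<Rightarrow> real" where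
  "degree n r G v = (\<Sum>e\<in>{e\<in>edges n r G. v \<in> e}. G e)"

text \<open>Entry a_{i_1,...,i_r} of the adjacency r-matrix, the index tuple given as
  a function i on {..<r}.\<close>
definition adj_entry :: "nat \<Rightarrow> nat \<Rightarrow> (nat set \<Rightarrow> real) \<Rightarrow> (nat \<Rightarrow> nat) \<Rightarrow> real" where
  "adj_entry n r G i =
     (if inj_on i {..<r} \<and> i ` {..<r} \<in> edges n r G then G (i ` {..<r}) else 0)"

definition adj_form :: "nat \<Rightarrow> nat \<Rightarrow> (nat set \<Rightarrow> real) \<Rightarrow> (nat \<Rightarrow> real) \<Rightarrow> real" where
  "adj_form n r G x =
     (\<Sum>i\<in>({..<r} \<rightarrow>\<^sub>E {..<n}). adj_entry n r G i * (\<Prod>j<r. x (i j)))"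

text \<open>Spectral radius via the variational characterization:
  max of |form| over real x with |x|_r = 1.\<close>
definition spec_radius :: "nat \<Rightarrow> nat \<Rightarrow> (nat set \<Rightarrow> real) \<Rightarrow> real" where
  "spec_radius n r G =
     Sup {\<bar>adj_form n r G x\<bar> | x. (\<Sum>k<n. \<bar>x k\<bar> ^ r) = 1}"

end

theory Submission
  imports Defs "HOL-Analysis.Convex"
begin

text \<open>Summing over ordered tuples, the form is r! times the edge sum of
  G(e) x^e.  For each edge, AM-GM applied to the numbers |x_v|^r / d_v gives
  |x^e| \<le> (1/r) (\<Sum>_{v\<in>e} |x_v|^r / d_v) (\<Prod>_{v\<in>e} d_v)^(1/r).  Weighting by G(e)
  and exchanging the order of summation, each vertex v collects its degree d_v,
  which cancels the denominator; the total is thus at most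
  (1/r) max_e (\<Prod>_{v\<in>e} d_v)^(1/r) whenever |x|_r = 1.\<close>

lemma card_inj_funcset_eq_fact:
  assumes "finite A" "card A = r"
  shows "card {f \<in> {..<r} \<rightarrow>\<^sub>E A. inj_on f {..<r}} = fact r"
proof -
  have "card {f \<in> {..<r} \<rightarrow>\<^sub>E A. inj_on f {..<r}} = prod ((-) r) {0..<r}"
    using card_inj_on_subset_funcset[of "{..<r}" A "{..<r}"] assms by simp
  also have "\<dots> = prod Suc {0..<r}"
    by (subst prod.atLeastLessThan_rev) (simp add: Suc_diff_Suc)
  finally show ?thesis by (simp add: prod_Suc_fact)
qed

lemma prod_le_weighted_amgm:
  fixes a d :: "'a \<Rightarrow> real"
  assumes "finite S" "card S = r" "r > 0"
    and a: "\<And>v. v \<in> S \<Longrightarrow> a v \<ge> 0" and d: "\<And>v. v \<in> S \<Longrightarrow> d v > 0"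
  shows "(\<Prod>v\<in>S. a v) \<le> (\<Sum>v\<in>S. a v ^ r / d v) / r * root r (\<Prod>v\<in>S. d v)"
proof -
  define y where "y v = a v ^ r / d v" for v
  have y: "y v \<ge> 0" if "v \<in> S" for v
    using a d that by (simp add: y_def less_imp_le)
  have "(\<Prod>v\<in>S. a v) = root r ((\<Prod>v\<in>S. a v) ^ r)"
    using assms by (simp add: real_root_power_cancel prod_nonneg)
  also have "(\<Prod>v\<in>S. a v) ^ r = (\<Prod>v\<in>S. y v) * (\<Prod>v\<in>S. d v)"
    unfolding prod_power_distrib prod.distrib[symmetric]
    by (intro prod.cong refl) (simp add: y_def d less_imp_neq[symmetric])
  also have "root r \<dots> = root r (\<Prod>v\<in>S. y v) * root r (\<Prod>v\<in>S. d v)"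
    by (rule real_root_mult)
  also have "\<dots> \<le> (\<Sum>v\<in>S. y v) / r * root r (\<Prod>v\<in>S. d v)"
  proof (rule mult_right_mono)
    have "root r (\<Prod>v\<in>S. y v) = (\<Prod>v\<in>S. y v) powr (1 / card S)"
      using assms y by (simp add: root_powr_inverse prod_nonneg)
    also have "\<dots> \<le> (\<Sum>v\<in>S. y v / card S)"
      using assms y by (intro arith_geom_mean) auto
    finally show "root r (\<Prod>v\<in>S. y v) \<le> (\<Sum>v\<in>S. y v) / r"
      using assms by (simp add: sum_divide_distrib)
    show "0 \<le> root r (\<Prod>v\<in>S. d v)"
      using d by (intro real_root_ge_zero prod_nonneg) (auto intro: less_imp_le)
  qed
  finally show ?thesis by (simp add: y_def)
qed

lemma finite_edges: "finite (edges n r G)"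
  unfolding edges_def by (rule finite_subset[of _ "Pow {..<n}"]) auto

lemma edge_weight_pos: "e \<in> edges n r G \<Longrightarrow> G e > 0"
  by (simp add: edges_def)

lemma degree_nonneg: "degree n r G v \<ge> 0"
  unfolding degree_def by (rule sum_nonneg) (auto simp: edges_def)

lemma edge_weight_le_degree:
  assumes "e \<in> edges n r G" "v \<in> e"
  shows "G e \<le> degree n r G v"
  unfolding degree_def
  by (rule member_le_sum) (use assms finite_edges in \<open>auto simp: edges_def\<close>)

lemma adj_form_eq_fact_edge_sum:
  "adj_form n r G x = fact r * (\<Sum>e\<in>edges n r G. G e * (\<Prod>v\<in>e. x v))"
proof -
  define E where "E = edges n r G"
  define h where "h i = adj_entry n r G i * (\<Prod>j<r. x (i j))" for i
  define tuples :: "nat set \<Rightarrow> (nat \<Rightarrow> nat) set" where "tuples e = {i \<in> {..<r} \<rightarrow>\<^sub>E e. inj_on i {..<r}}" for e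
  have tuple_image: "i ` {..<r} = e" if "e \<in> E" "i \<in> tuples e" for e i
  proof -
    have "finite e" "card e = r" using \<open>e \<in> E\<close> finite_subset by (auto simp: E_def edges_def)
    moreover have "i ` {..<r} \<subseteq> e" "card (i ` {..<r}) = r"
      using \<open>i \<in> tuples e\<close> by (auto simp: tuples_def card_image)
    ultimately show ?thesis by (metis card_subset_eq)
  qed
  have "adj_form n r G x = sum h (\<Union>e\<in>E. tuples e)"
    unfolding adj_form_def h_def
  proof (rule sum.mono_neutral_right)
    show "(\<Union>e\<in>E. tuples e) \<subseteq> {..<r} \<rightarrow>\<^sub>E {..<n}"
      using tuple_image by (auto simp: tuples_def E_def edges_def PiE_def)
    show "\<forall>i \<in> ({..<r} \<rightarrow>\<^sub>E {..<n}) - (\<Union>e\<in>E. tuples e). adj_entry n r G i * (\<Prod>j<r. x (i j)) = 0"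
      by (auto simp: adj_entry_def tuples_def E_def PiE_def)
  qed (simp add: finite_PiE)
  also have "\<dots> = (\<Sum>e\<in>E. sum h (tuples e))"
  proof (rule sum.UNION_disjoint)
    show "finite E" by (simp add: E_def finite_edges)
    show "\<forall>e\<in>E. finite (tuples e)"
      by (auto simp: tuples_def E_def edges_def intro: finite_PiE finite_subset)
    show "\<forall>e\<in>E. \<forall>e'\<in>E. e \<noteq> e' \<longrightarrow> tuples e \<inter> tuples e' = {}"
      using tuple_image by blast
  qed
  also have "\<dots> = (\<Sum>e\<in>E. fact r * (G e * (\<Prod>v\<in>e. x v)))"
  proof (rule sum.cong[OF refl])
    fix e assume e: "e \<in> E"
    have "h i = G e * (\<Prod>v\<in>e. x v)" if "i \<in> tuples e" for i
    proof -
      have inj: "inj_on i {..<r}" using that by (simp add: tuples_def)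
      have im: "i ` {..<r} = e" by (rule tuple_image[OF e that])
      have "(\<Prod>v\<in>e. x v) = (\<Prod>j<r. x (i j))"
        unfolding im[symmetric] prod.reindex[OF inj] by simp
      then show ?thesis using inj im e by (simp add: h_def adj_entry_def E_def)
    qed
    moreover have "card (tuples e) = fact r"
      using e finite_subset by (auto simp: tuples_def E_def edges_def intro!: card_inj_funcset_eq_fact)
    ultimately show "sum h (tuples e) = fact r * (G e * (\<Prod>v\<in>e. x v))"
      by simp
  qed
  finally show ?thesis by (simp add: E_def sum_distrib_left)
qed


definition max_edge_degree_product :: "nat \<Rightarrow> nat \<Rightarrow> (nat set \<Rightarrow> real) \<Rightarrow> real" where
  "max_edge_degree_product n r G =
     Max (insert 0 ((\<lambda>e. \<Prod>v\<in>e. degree n r G v) ` edges n r G))"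

lemma max_edge_degree_product_nonneg: "max_edge_degree_product n r G \<ge> 0"
  unfolding max_edge_degree_product_def by (rule Max_ge) (simp_all add: finite_edges)

lemma edge_degree_product_le_max:
  "e \<in> edges n r G \<Longrightarrow> (\<Prod>v\<in>e. degree n r G v) \<le> max_edge_degree_product n r G"
  unfolding max_edge_degree_product_def by (rule Max_ge) (simp_all add: finite_edges)

lemma edge_monomial_le:
  fixes x :: "nat \<Rightarrow> real"
  assumes "r > 0" and e: "e \<in> edges n r G"
  shows "(\<Prod>v\<in>e. \<bar>x v\<bar>) \<le>
    (\<Sum>v\<in>e. \<bar>x v\<bar> ^ r / degree n r G v) / r * root r (max_edge_degree_product n r G)"
proof -
  have card: "finite e" "card e = r"
    using e assms by (auto simp: edges_def intro: card_ge_0_finite)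
  have deg: "degree n r G v > 0" if "v \<in> e" for v
    using edge_weight_pos[OF e] edge_weight_le_degree[OF e that] by linarith
  have "(\<Prod>v\<in>e. \<bar>x v\<bar>) \<le>
      (\<Sum>v\<in>e. \<bar>x v\<bar> ^ r / degree n r G v) / r * root r (\<Prod>v\<in>e. degree n r G v)"
    using card \<open>r > 0\<close> deg by (intro prod_le_weighted_amgm) auto
  also have "\<dots> \<le> (\<Sum>v\<in>e. \<bar>x v\<bar> ^ r / degree n r G v) / r * root r (max_edge_degree_product n r G)"
    using \<open>r > 0\<close> edge_degree_product_le_max[OF e]
    by (intro mult_left_mono real_root_le_mono divide_nonneg_nonneg sum_nonneg)
       (simp_all add: degree_nonneg)
  finally show ?thesis .
qed

lemma sum_edges_sum_vertices:
  "(\<Sum>e\<in>edges n r G. G e * (\<Sum>v\<in>e. z v)) = (\<Sum>v<n. degree n r G v * z v)"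
proof -
  have "(\<Sum>e\<in>edges n r G. G e * (\<Sum>v\<in>e. z v)) =
      (\<Sum>e\<in>edges n r G. \<Sum>v\<in>{v\<in>{..<n}. v \<in> e}. G e * z v)"
    by (intro sum.cong refl) (auto simp: sum_distrib_left edges_def intro: sum.cong)
  also have "\<dots> = (\<Sum>v<n. \<Sum>e\<in>{e\<in>edges n r G. v \<in> e}. G e * z v)"
    by (rule sum.swap_restrict) (simp_all add: finite_edges)
  finally show ?thesis by (simp add: degree_def sum_distrib_right)
qed

lemma abs_adj_form_le:
  fixes x :: "nat \<Rightarrow> real"
  assumes "r > 0" and x: "(\<Sum>k<n. \<bar>x k\<bar> ^ r) = 1"
  shows "\<bar>adj_form n r G x\<bar> \<le> fact (r - 1) * root r (max_edge_degree_product n r G)"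
proof -
  define R where "R = root r (max_edge_degree_product n r G)"
  define z where "z v = \<bar>x v\<bar> ^ r / degree n r G v" for v
  have R: "R \<ge> 0" by (simp add: R_def real_root_ge_zero max_edge_degree_product_nonneg)
  have "\<bar>\<Sum>e\<in>edges n r G. G e * (\<Prod>v\<in>e. x v)\<bar> \<le>
      (\<Sum>e\<in>edges n r G. G e * (\<Prod>v\<in>e. \<bar>x v\<bar>))"
    by (rule order.trans[OF sum_abs])
       (simp add: abs_mult abs_prod edge_weight_pos less_imp_le cong: sum.cong)
  also have "\<dots> \<le> (\<Sum>e\<in>edges n r G. G e * ((\<Sum>v\<in>e. z v) / r * R))"
    using edge_monomial_le[OF \<open>r > 0\<close>]
    by (intro sum_mono mult_left_mono) (simp_all add: z_def R_def edge_weight_pos less_imp_le)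
  also have "\<dots> = R / r * (\<Sum>e\<in>edges n r G. G e * (\<Sum>v\<in>e. z v))"
    by (simp add: sum_distrib_left sum_divide_distrib algebra_simps)
  also have "\<dots> = R / r * (\<Sum>v<n. degree n r G v * z v)"
    by (simp add: sum_edges_sum_vertices)
  also have "\<dots> \<le> R / r * (\<Sum>k<n. \<bar>x k\<bar> ^ r)"
    \<comment> \<open>equality except at isolated vertices, where division by the zero degree gives 0\<close>
    using R by (intro mult_left_mono sum_mono) (simp_all add: z_def)
  finally have edge_sum: "\<bar>\<Sum>e\<in>edges n r G. G e * (\<Prod>v\<in>e. x v)\<bar> \<le> R / r"
    by (simp add: x)
  have "\<bar>adj_form n r G x\<bar> \<le> fact r * (R / r)"
    using mult_left_mono[OF edge_sum, of "fact r"] by (simp add: adj_form_eq_fact_edge_sum abs_mult)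
  also have "\<dots> = fact (r - 1) * R"
    using \<open>r > 0\<close> by (simp add: fact_reduce[of r])
  finally show ?thesis by (simp add: R_def)
qed

lemma spec_radius_le_bound:
  assumes "r > 0" "n \<ge> 1"
    and bound: "\<And>x. (\<Sum>k<n. \<bar>x k\<bar> ^ r) = 1 \<Longrightarrow> \<bar>adj_form n r G x\<bar> \<le> C"
  shows "0 \<le> spec_radius n r G" "spec_radius n r G \<le> C"
proof -
  define S where "S = {\<bar>adj_form n r G x\<bar> | x. (\<Sum>k<n. \<bar>x k\<bar> ^ r) = 1}"
  define e0 :: "nat \<Rightarrow> real" where "e0 k = (if k = 0 then 1 else 0)" for k
  have "(\<Sum>k<n. \<bar>e0 k\<bar> ^ r) = (\<Sum>k<n. if k = 0 then 1 else 0)"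
    using \<open>r > 0\<close> by (intro sum.cong) (auto simp: e0_def)
  also have "\<dots> = 1" using \<open>n \<ge> 1\<close> by simp
  finally have e0S: "\<bar>adj_form n r G e0\<bar> \<in> S" unfolding S_def by blast
  have le: "s \<le> C" if "s \<in> S" for s using that bound by (auto simp: S_def)
  then have "bdd_above S" by (auto simp: bdd_above_def)
  then have "\<bar>adj_form n r G e0\<bar> \<le> Sup S" by (rule cSup_upper[OF e0S])
  then show "0 \<le> spec_radius n r G" by (simp add: spec_radius_def S_def[symmetric])
  show "spec_radius n r G \<le> C"
    unfolding spec_radius_def S_def[symmetric] using e0S le by (intro cSup_least) auto
qed

theorem theorem28:
  fixes n r :: nat and G :: "nat set \<Rightarrow> real"
  assumes "r \<ge> 2" and "n \<ge> 1" and "weighted_rgraph n r G"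
  shows "spec_radius n r G ^ r \<le>
    (fact (r - 1)) ^ r * Max (insert 0 ((\<lambda>e. \<Prod>v\<in>e. degree n r G v) ` edges n r G))"
proof -
  \<comment> \<open>Only positive weights enter the edge set.\<close>
  define M where "M = max_edge_degree_product n r G"
  have "r > 0" using \<open>r \<ge> 2\<close> by simp
  have "0 \<le> spec_radius n r G" "spec_radius n r G \<le> fact (r - 1) * root r M"
    using spec_radius_le_bound[OF \<open>r > 0\<close> \<open>n \<ge> 1\<close> abs_adj_form_le[OF \<open>r > 0\<close>]]
    by (simp_all add: M_def)
  then have "spec_radius n r G ^ r \<le> (fact (r - 1) * root r M) ^ r"
    by (auto intro: power_mono)
  also have "\<dots> = fact (r - 1) ^ r * M"
    using \<open>r > 0\<close> by (simp add: power_mult_distrib M_def max_edge_degree_product_nonneg)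
  finally show ?thesis by (simp add: M_def max_edge_degree_product_def)
qed

end
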